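(* For every positive integer $\gamma$ there exists a tree $T$ with domination number $\gamma$ such that $\Gamma(T)>\frac{2}{5}\sqrt5^{\,\gamma}$.
   Context: For a graph $G$, a set $D\subseteq V(G)$ is dominating if every vertex of $G$ lies in $D$ or has a neighbour in $D$. The domination number $\gamma(G)$ is the minimum size of a dominating set; $\Gamma(G)$ denotes the number of dominating sets of $G$ of size $\gamma(G)$. *)

theory Defs
  imports Complex_Main
begin

definition simple_graph :: "'a set \<Rightarrow> 'a set set \<Rightarrow> bool" where
  "simple_graph V E \<longleftrightarrow> finite V \<and> (\<forall>e\<in>E. e \<subseteq> V \<and> card e = 2)"

definition adj :: "'a set set \<Rightarrow> 'a \<Rightarrow> 'a \<Rightarrow> bool" where
  "adj E u v \<longleftrightarrow> {u, v} \<in> E"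

definition walk :: "'a set \<Rightarrow> 'a set set \<Rightarrow> 'a list \<Rightarrow> bool" where
  "walk V E xs \<longleftrightarrow> xs \<noteq> [] \<and> set xs \<subseteq> V \<and>
     (\<forall>i. Suc i < length xs \<longrightarrow> adj E (xs ! i) (xs ! Suc i))"

definition connected_graph :: "'a set \<Rightarrow> 'a set set \<Rightarrow> bool" where
  "connected_graph V E \<longleftrightarrow>
     (\<forall>u\<in>V. \<forall>v\<in>V. \<exists>xs. walk V E xs \<and> hd xs = u \<and> last xs = v)"

definition is_cycle :: "'a set \<Rightarrow> 'a set set \<Rightarrow> 'a list \<Rightarrow> bool" where
  "is_cycle V E xs \<longleftrightarrow> length xs \<ge> 3 \<and> distinct xs \<and> walk V E xs \<and>
     adj E (last xs) (hd xs)"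

definition acyclic_graph :: "'a set \<Rightarrow> 'a set set \<Rightarrow> bool" where
  "acyclic_graph V E \<longleftrightarrow> (\<nexists>xs. is_cycle V E xs)"

definition is_tree :: "'a set \<Rightarrow> 'a set set \<Rightarrow> bool" where
  "is_tree V E \<longleftrightarrow> simple_graph V E \<and> V \<noteq> {} \<and> connected_graph V E \<and> acyclic_graph V E"

definition dominating :: "'a set \<Rightarrow> 'a set set \<Rightarrow> 'a set \<Rightarrow> bool" where
  "dominating V E D \<longleftrightarrow> D \<subseteq> V \<and> (\<forall>v\<in>V. v \<in> D \<or> (\<exists>u\<in>D. adj E v u))"

definition domination_number :: "'a set \<Rightarrow> 'a set set \<Rightarrow> nat" where
  "domination_number V E = (LEAST k. \<exists>D. dominating V E D \<and> card D = k)"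

definition num_min_dominating :: "'a set \<Rightarrow> 'a set set \<Rightarrow> nat" where
  "num_min_dominating V E =
     card {D. dominating V E D \<and> card D = domination_number V E}"

end

theory Submission
  imports Defs
begin

(*
  Hang pendant trees from the root r of a tree and count, instead of dominating sets, the sets of
  minimum size that dominate every vertex except r. If all of them contain r, this property
  survives hanging a tree T from r by an edge to a vertex x of T, and the new count is the old
  one times the number of minimum sets dominating T - x, while the sizes add. The star K_{1,2}
  rooted at its centre (size 1, one set) with k paths P_5 hung by an end (size 2, five sets each)
  is a tree with domination number 2k + 1 and 5^k minimum dominating sets; one more pendant tree
  on 7 vertices (size 3, eleven sets) gives 2k + 4 and 11 * 5^k, and P_4 covers the value 2.
  Finally 5^k > (2/5) sqrt 5^(2k+1) and 11 * 5^k > 10 * 5^k = (2/5) sqrt 5^(2k+4).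
*)

lemma adj_commute: "adj E u v = adj E v u"
  by (simp add: adj_def insert_commute)

lemma walk_mono: "walk V E xs \<Longrightarrow> V \<subseteq> V' \<Longrightarrow> E \<subseteq> E' \<Longrightarrow> walk V' E' xs"
  by (auto simp: walk_def adj_def)

lemma walk_Cons:
  assumes "walk V E xs" "v \<in> V" "adj E v (hd xs)"
  shows "walk V E (v # xs)"
  using assms by (auto simp: walk_def hd_conv_nth nth_Cons split: nat.split)

lemma walk_rev:
  assumes "walk V E xs"
  shows "walk V E (rev xs)"
  unfolding walk_def
proof (intro conjI allI impI)
  show "rev xs \<noteq> []" "set (rev xs) \<subseteq> V" using assms by (auto simp: walk_def)
  fix i assume i: "Suc i < length (rev xs)"
  define j where "j = length xs - Suc (Suc i)"
  have "Suc j < length xs" "Suc j = length xs - Suc i" using i by (auto simp: j_def)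
  then have "adj E (xs ! j) (xs ! (length xs - Suc i))" using assms by (metis walk_def)
  then show "adj E (rev xs ! i) (rev xs ! Suc i)"
    using i by (simp add: rev_nth j_def adj_commute)
qed

lemma is_cycle_two_neighbours:
  assumes "is_cycle V E xs" "v \<in> set xs"
  shows "\<exists>a b. a \<noteq> b \<and> adj E v a \<and> adj E v b"
proof -
  let ?n = "length xs"
  define succ where "succ j = (if Suc j = ?n then 0 else Suc j)" for j
  have n3: "3 \<le> ?n" and dist: "distinct xs" and w: "walk V E xs"
    and closing: "adj E (last xs) (hd xs)"
    using assms(1) by (auto simp: is_cycle_def)
  have step: "adj E (xs ! j) (xs ! succ j)" if "j < ?n" for j
  proof (cases "Suc j = ?n")
    case True
    then have "j = ?n - 1" by simp
    moreover have "xs \<noteq> []" using n3 by auto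
    ultimately show ?thesis using closing True by (simp add: succ_def last_conv_nth hd_conv_nth)
  next
    case False
    then show ?thesis using w that by (simp add: walk_def succ_def)
  qed
  obtain i where i: "i < ?n" "xs ! i = v" using assms(2) by (auto simp: in_set_conv_nth)
  define pr where "pr = (if i = 0 then ?n - 1 else i - 1)"
  have "pr < ?n" "succ i < ?n" "succ pr = i" "pr \<noteq> succ i"
    using i n3 by (auto simp: pr_def succ_def)
  then show ?thesis
    using step[of pr] step[OF i(1)] i dist adj_commute nth_eq_iff_index_eq by metis
qed

lemma is_tree_singleton: "is_tree {a} {}"
  unfolding is_tree_def simple_graph_def connected_graph_def acyclic_graph_def is_cycle_def
  by (auto intro!: exI[of _ "[a]"] simp: walk_def adj_def)

lemma connected_graph_insert_leaf:
  assumes con: "connected_graph V E" and u: "u \<in> V"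
  shows "connected_graph (insert v V) (insert {u, v} E)"
  unfolding connected_graph_def
proof (intro ballI)
  let ?V = "insert v V" and ?E = "insert {u, v} E"
  have lift: "walk ?V ?E xs" if "walk V E xs" for xs
    using that by (rule walk_mono) auto
  have uv: "adj ?E u v" "adj ?E v u" by (auto simp: adj_def insert_commute)
  have from_v: "\<exists>xs. walk ?V ?E xs \<and> hd xs = v \<and> last xs = b" if b: "b \<in> ?V" for b
  proof (cases "b = v")
    case True
    then show ?thesis by (auto intro!: exI[of _ "[v]"] simp: walk_def)
  next
    case False
    then obtain xs where xs: "walk V E xs" "hd xs = u" "last xs = b"
      using con u b by (auto simp: connected_graph_def)
    then have "walk ?V ?E (v # xs)" using walk_Cons[OF lift] uv by auto
    then show ?thesis using xs by (intro exI[of _ "v # xs"]) (auto simp: walk_def)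
  qed
  fix a b assume a: "a \<in> ?V" and b: "b \<in> ?V"
  consider "a = v" | "b = v" | "a \<in> V" "b \<in> V" using a b by blast
  then show "\<exists>xs. walk ?V ?E xs \<and> hd xs = a \<and> last xs = b"
  proof cases
    case 1
    then show ?thesis using from_v b by blast
  next
    case 2
    then obtain xs where xs: "walk ?V ?E xs" "hd xs = v" "last xs = a"
      using from_v a by blast
    then have "walk ?V ?E (rev xs)" by (intro walk_rev)
    then show ?thesis using xs 2 by (intro exI[of _ "rev xs"]) (auto simp: walk_def hd_rev last_rev)
  next
    case 3
    then obtain xs where "walk V E xs" "hd xs = a" "last xs = b"
      using con by (auto simp: connected_graph_def)
    then show ?thesis using lift by blast
  qed
qed

lemma acyclic_graph_insert_leaf:
  assumes ac: "acyclic_graph V E" and E: "\<forall>e\<in>E. e \<subseteq> V" and v: "v \<notin> V"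
  shows "acyclic_graph (insert v V) (insert {u, v} E)"
  unfolding acyclic_graph_def
proof
  let ?V = "insert v V" and ?E = "insert {u, v} E"
  assume "\<exists>xs. is_cycle ?V ?E xs"
  then obtain xs where c: "is_cycle ?V ?E xs" by blast
  have "w = u" if "adj ?E v w" for w
    using that E v by (auto simp: adj_def doubleton_eq_iff)
  then have v_off: "v \<notin> set xs" using is_cycle_two_neighbours[OF c] by metis
  have old: "adj E a b" if "adj ?E a b" "a \<in> set xs" "b \<in> set xs" for a b
    using that v_off by (auto simp: adj_def doubleton_eq_iff)
  have "walk V E xs" using c v_off old by (auto simp: is_cycle_def walk_def)
  moreover have "xs \<noteq> []" using c by (auto simp: is_cycle_def walk_def)
  ultimately have "is_cycle V E xs" using c old by (auto simp: is_cycle_def)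
  then show False using ac by (auto simp: acyclic_graph_def)
qed

lemma is_tree_insert_leaf:
  assumes "is_tree V E" "u \<in> V" "v \<notin> V"
  shows "is_tree (insert v V) (insert {u, v} E)"
proof -
  have "u \<noteq> v" using assms(2,3) by auto
  then have "simple_graph (insert v V) (insert {u, v} E)"
    using assms by (auto simp: is_tree_def simple_graph_def)
  then show ?thesis
    using assms connected_graph_insert_leaf acyclic_graph_insert_leaf
    by (auto simp: is_tree_def simple_graph_def)
qed

(* The tree on {0..<s} in which each j > 0 is joined to its parent q j < j; graft n E r s q hangs
   a copy of it, shifted to {n..<n + s}, from r by the edge {r, n}. *)
definition parent_edges :: "nat \<Rightarrow> (nat \<Rightarrow> nat) \<Rightarrow> nat set set" where
  "parent_edges s q = (\<lambda>j. {j, q j}) ` {1..<s}"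

definition graft :: "nat \<Rightarrow> nat set set \<Rightarrow> nat \<Rightarrow> nat \<Rightarrow> (nat \<Rightarrow> nat) \<Rightarrow> nat set set" where
  "graft n E r s q = insert {r, n} (E \<union> image ((+) n) ` parent_edges s q)"

lemma parent_edges_Suc:
  "0 < s \<Longrightarrow> parent_edges (Suc s) q = insert {s, q s} (parent_edges s q)"
  by (auto simp: parent_edges_def atLeastLessThanSuc)

lemma is_tree_graft:
  assumes T: "is_tree {0..<n} E" and r: "r < n"
    and q: "\<forall>j\<in>{1..<s}. q j < j" and s: "0 < s"
  shows "is_tree {0..<n + s} (graft n E r s q)"
  using s q
proof (induction s rule: nat_induct_non_zero)
  case 1
  have "is_tree (insert n {0..<n}) (insert {r, n} E)"
    using T r by (intro is_tree_insert_leaf) auto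
  then show ?case by (simp add: graft_def parent_edges_def atLeast0_lessThan_Suc)
next
  case (Suc s)
  then have "is_tree {0..<n + s} (graft n E r s q)" by simp
  then have "is_tree (insert (n + s) {0..<n + s}) (insert {n + q s, n + s} (graft n E r s q))"
    using Suc.prems Suc.hyps by (intro is_tree_insert_leaf) auto
  then show ?case
    using Suc.hyps by (simp add: graft_def parent_edges_Suc insert_commute atLeast0_lessThan_Suc)
qed

definition dominates :: "'a set set \<Rightarrow> 'a set \<Rightarrow> 'a set \<Rightarrow> bool" where
  "dominates E S A \<longleftrightarrow> (\<forall>v\<in>S. v \<in> A \<or> (\<exists>u\<in>A. adj E v u))"

definition min_dominating_count :: "'a set \<Rightarrow> 'a set set \<Rightarrow> 'a set \<Rightarrow> nat \<Rightarrow> nat \<Rightarrow> bool" where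
  "min_dominating_count V E S k N \<longleftrightarrow>
     (\<forall>A\<in>Pow V. dominates E S A \<longrightarrow> k \<le> card A) \<and>
     card {A\<in>Pow V. dominates E S A \<and> card A = k} = N \<and> 0 < N"

lemma dominating_iff_dominates: "dominating V E D \<longleftrightarrow> D \<in> Pow V \<and> dominates E V D"
  by (auto simp: dominating_def dominates_def)

lemma min_dominating_count_domination:
  assumes "min_dominating_count V E V k N"
  shows "domination_number V E = k \<and> num_min_dominating V E = N"
proof -
  have low: "\<forall>A\<in>Pow V. dominates E V A \<longrightarrow> k \<le> card A"
    and N: "card {A\<in>Pow V. dominates E V A \<and> card A = k} = N" "0 < N"
    using assms by (auto simp: min_dominating_count_def)
  have min_sets: "{D. dominating V E D \<and> card D = k} = {A\<in>Pow V. dominates E V A \<and> card A = k}"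
    by (auto simp: dominating_iff_dominates)
  moreover have "{A\<in>Pow V. dominates E V A \<and> card A = k} \<noteq> {}"
    using N by (metis card.empty less_irrefl)
  ultimately obtain D where "dominating V E D" "card D = k" by blast
  have "domination_number V E = k"
    unfolding domination_number_def
  proof (rule Least_equality)
    show "\<exists>D. dominating V E D \<and> card D = k" using \<open>dominating V E D\<close> \<open>card D = k\<close> by blast
  qed (use low in \<open>auto simp: dominating_iff_dominates\<close>)
  then show ?thesis using min_sets N by (simp add: num_min_dominating_def)
qed

(* Each of the N sets of size k dominating V - {r} contains the root r, so they are exactly the
   minimum dominating sets of V; this is the invariant that survives hanging trees from r. *)
definition rooted_count :: "'a set \<Rightarrow> 'a set set \<Rightarrow> 'a \<Rightarrow> nat \<Rightarrow> nat \<Rightarrow> bool" where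
  "rooted_count V E r k N \<longleftrightarrow> simple_graph V E \<and> r \<in> V \<and>
     min_dominating_count V E (V - {r}) k N \<and>
     (\<forall>A\<in>Pow V. dominates E (V - {r}) A \<and> card A = k \<longrightarrow> r \<in> A)"

lemma rooted_count_min_dominating_count:
  assumes "rooted_count V E r k N"
  shows "min_dominating_count V E V k N"
proof -
  have root: "\<forall>A\<in>Pow V. dominates E (V - {r}) A \<and> card A = k \<longrightarrow> r \<in> A"
    and C: "min_dominating_count V E (V - {r}) k N"
    using assms by (auto simp: rooted_count_def)
  have sub: "dominates E (V - {r}) A" if "dominates E V A" for A
    using that unfolding dominates_def by blast
  have sup: "dominates E V A" if "dominates E (V - {r}) A" "r \<in> A" for A
    using that unfolding dominates_def by blast
  have "{A\<in>Pow V. dominates E V A \<and> card A = k} = {A\<in>Pow V. dominates E (V - {r}) A \<and> card A = k}"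
    using root sub sup by blast
  then show ?thesis using C sub by (simp add: min_dominating_count_def)
qed

lemma dominates_restrict:
  assumes "dominates G S' A" "S \<subseteq> S'" "S \<subseteq> V"
    and "\<And>v u. v \<in> S \<Longrightarrow> adj G v u \<Longrightarrow> adj E v u \<and> u \<in> V"
  shows "dominates E S (A \<inter> V)"
  using assms unfolding dominates_def by blast

lemma dominates_attach_restrict:
  assumes C: "dominates (insert {r, x} (E \<union> F)) S C" "V - {r} \<subseteq> S"
    and E: "simple_graph V E" and F: "simple_graph W F" and x: "x \<in> W" and disj: "V \<inter> W = {}"
  shows "dominates E (V - {r}) (C \<inter> V)"
proof (rule dominates_restrict[OF C])
  fix v u assume v: "v \<in> V - {r}" and vu: "adj (insert {r, x} (E \<union> F)) v u"
  have "{v, u} \<noteq> {r, x}" using v x disj by (auto simp: doubleton_eq_iff)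
  moreover have "{v, u} \<notin> F" using v disj F by (force simp: simple_graph_def)
  ultimately have "{v, u} \<in> E" using vu by (auto simp: adj_def)
  then show "adj E v u \<and> u \<in> V" using E by (auto simp: adj_def simple_graph_def)
qed blast

lemma dominates_attach_Un:
  assumes A: "dominates E (V - {r}) A" and B: "dominates F (W - {x}) B" and r: "r \<in> A"
  shows "dominates (insert {r, x} (E \<union> F)) (V \<union> W - {r}) (A \<union> B)"
  unfolding dominates_def
proof
  let ?G = "insert {r, x} (E \<union> F)"
  fix v assume v: "v \<in> V \<union> W - {r}"
  have lift: "adj ?G v u" if "adj E v u \<or> adj F v u" for u
    using that by (auto simp: adj_def)
  consider "v \<in> V - {r}" | "v = x" | "v \<in> W - {x}" using v by blast
  then show "v \<in> A \<union> B \<or> (\<exists>u\<in>A \<union> B. adj ?G v u)"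
  proof cases
    case 1
    then show ?thesis using A lift unfolding dominates_def by blast
  next
    case 2
    then have "adj ?G v r" by (simp add: adj_def insert_commute)
    then show ?thesis using r by blast
  next
    case 3
    then show ?thesis using B lift unfolding dominates_def by blast
  qed
qed

lemma card_Int_split:
  assumes "finite V" "finite W" "V \<inter> W = {}" "C \<subseteq> V \<union> W"
  shows "card C = card (C \<inter> V) + card (C \<inter> W)"
proof -
  have "C \<inter> V \<union> C \<inter> W = C" using assms(4) by blast
  moreover have "card (C \<inter> V \<union> C \<inter> W) = card (C \<inter> V) + card (C \<inter> W)"
    using assms(1-3) by (intro card_Un_disjoint) auto
  ultimately show ?thesis by simp
qed

lemma card_Pow_Un_split:
  assumes disj: "V \<inter> W = {}" and MV: "MV \<subseteq> Pow V" and MW: "MW \<subseteq> Pow W"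
  shows "card {C\<in>Pow (V \<union> W). C \<inter> V \<in> MV \<and> C \<inter> W \<in> MW} = card MV * card MW"
proof -
  have split: "(A \<union> B) \<inter> V = A" "(A \<union> B) \<inter> W = B" if "A \<in> MV" "B \<in> MW" for A B
    using that MV MW disj by blast+
  have "{C\<in>Pow (V \<union> W). C \<inter> V \<in> MV \<and> C \<inter> W \<in> MW} = (\<lambda>(A, B). A \<union> B) ` (MV \<times> MW)"
  proof (intro set_eqI iffI)
    fix C assume C: "C \<in> {C\<in>Pow (V \<union> W). C \<inter> V \<in> MV \<and> C \<inter> W \<in> MW}"
    then have "C = (\<lambda>(A, B). A \<union> B) (C \<inter> V, C \<inter> W)" by auto
    then show "C \<in> (\<lambda>(A, B). A \<union> B) ` (MV \<times> MW)" using C by (auto intro: rev_image_eqI)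
  next
    fix C assume "C \<in> (\<lambda>(A, B). A \<union> B) ` (MV \<times> MW)"
    then show "C \<in> {C\<in>Pow (V \<union> W). C \<inter> V \<in> MV \<and> C \<inter> W \<in> MW}"
      using split MV MW by auto
  qed
  moreover have "inj_on (\<lambda>(A, B). A \<union> B) (MV \<times> MW)"
  proof (rule inj_onI, clarify)
    fix A B A' B' assume "A \<in> MV" "B \<in> MW" "A' \<in> MV" "B' \<in> MW" "A \<union> B = A' \<union> B'"
    then show "A = A' \<and> B = B'" using split by metis
  qed
  ultimately show ?thesis by (simp add: card_image card_cartesian_product)
qed

lemma dominates_attach_min:
  assumes E: "simple_graph V E" and F: "simple_graph W F" and r: "r \<in> V" and x: "x \<in> W"
    and disj: "V \<inter> W = {}"
    and low_V: "\<forall>A\<in>Pow V. dominates E (V - {r}) A \<longrightarrow> g \<le> card A"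
    and low_W: "\<forall>B\<in>Pow W. dominates F (W - {x}) B \<longrightarrow> m \<le> card B"
    and root: "\<forall>A\<in>Pow V. dominates E (V - {r}) A \<and> card A = g \<longrightarrow> r \<in> A"
    and C: "C \<subseteq> V \<union> W"
  shows "dominates (insert {r, x} (E \<union> F)) (V \<union> W - {r}) C \<Longrightarrow> g + m \<le> card C"
    and "dominates (insert {r, x} (E \<union> F)) (V \<union> W - {r}) C \<and> card C = g + m \<longleftrightarrow>
      dominates E (V - {r}) (C \<inter> V) \<and> card (C \<inter> V) = g \<and>
      dominates F (W - {x}) (C \<inter> W) \<and> card (C \<inter> W) = m"
proof -
  have fin: "finite V" "finite W" using E F by (auto simp: simple_graph_def)
  have split: "card C = card (C \<inter> V) + card (C \<inter> W)" by (rule card_Int_split[OF fin disj C])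
  \<comment> \<open>the second restriction is the first with (V, E, r) and (W, F, x) exchanged\<close>
  have restrict: "dominates E (V - {r}) (C \<inter> V)" "dominates F (W - {x}) (C \<inter> W)"
    if "dominates (insert {r, x} (E \<union> F)) (V \<union> W - {r}) C"
    using dominates_attach_restrict[OF that _ E F x disj]
      dominates_attach_restrict[of x r F E, OF _ _ F E r] that disj r
    by (auto simp: insert_commute Un_commute Int_commute)
  show low: "g + m \<le> card C" if "dominates (insert {r, x} (E \<union> F)) (V \<union> W - {r}) C"
    using low_V low_W restrict[OF that] split by force
  show "dominates (insert {r, x} (E \<union> F)) (V \<union> W - {r}) C \<and> card C = g + m \<longleftrightarrow>
      dominates E (V - {r}) (C \<inter> V) \<and> card (C \<inter> V) = g \<and>
      dominates F (W - {x}) (C \<inter> W) \<and> card (C \<inter> W) = m"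
  proof
    assume "dominates (insert {r, x} (E \<union> F)) (V \<union> W - {r}) C \<and> card C = g + m"
    moreover have "g \<le> card (C \<inter> V)" "m \<le> card (C \<inter> W)"
      using low_V low_W restrict calculation by auto
    ultimately show "dominates E (V - {r}) (C \<inter> V) \<and> card (C \<inter> V) = g \<and>
      dominates F (W - {x}) (C \<inter> W) \<and> card (C \<inter> W) = m"
      using restrict split by simp
  next
    assume parts: "dominates E (V - {r}) (C \<inter> V) \<and> card (C \<inter> V) = g \<and>
      dominates F (W - {x}) (C \<inter> W) \<and> card (C \<inter> W) = m"
    then have "r \<in> C \<inter> V" using root by blast
    then have "dominates (insert {r, x} (E \<union> F)) (V \<union> W - {r}) (C \<inter> V \<union> C \<inter> W)"
      using parts by (simp add: dominates_attach_Un)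
    moreover have "C \<inter> V \<union> C \<inter> W = C" using C by blast
    ultimately show "dominates (insert {r, x} (E \<union> F)) (V \<union> W - {r}) C \<and> card C = g + m"
      using parts split by simp
  qed
qed

lemma rooted_count_attach:
  assumes R: "rooted_count V E r g N"
    and F: "simple_graph W F" and x: "x \<in> W" and C: "min_dominating_count W F (W - {x}) m c"
    and disj: "V \<inter> W = {}"
  shows "rooted_count (V \<union> W) (insert {r, x} (E \<union> F)) r (g + m) (N * c)"
proof -
  let ?G = "insert {r, x} (E \<union> F)"
  let ?MV = "{A\<in>Pow V. dominates E (V - {r}) A \<and> card A = g}"
  let ?MW = "{B\<in>Pow W. dominates F (W - {x}) B \<and> card B = m}"
  let ?M = "{C\<in>Pow (V \<union> W). dominates ?G (V \<union> W - {r}) C \<and> card C = g + m}"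
  have E: "simple_graph V E" and r: "r \<in> V"
    and low_V: "\<forall>A\<in>Pow V. dominates E (V - {r}) A \<longrightarrow> g \<le> card A"
    and low_W: "\<forall>B\<in>Pow W. dominates F (W - {x}) B \<longrightarrow> m \<le> card B"
    and root: "\<forall>A\<in>Pow V. dominates E (V - {r}) A \<and> card A = g \<longrightarrow> r \<in> A"
    and count: "card ?MV = N" "card ?MW = c" "0 < N" "0 < c"
    using R C by (auto simp: rooted_count_def min_dominating_count_def)
  note attach = dominates_attach_min[OF E F r x disj low_V low_W root]
  have min_sets: "?M = {C\<in>Pow (V \<union> W). C \<inter> V \<in> ?MV \<and> C \<inter> W \<in> ?MW}"
    using attach(2) by auto
  have card_M: "card ?M = card ?MV * card ?MW"
    unfolding min_sets by (rule card_Pow_Un_split[OF disj]) auto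
  have "r \<noteq> x" using r x disj by blast
  then have "simple_graph (V \<union> W) ?G"
    using E F r x unfolding simple_graph_def by auto
  moreover have "card ?M = N * c" "0 < N * c" using card_M count by simp_all
  moreover have "\<forall>C\<in>Pow (V \<union> W). dominates ?G (V \<union> W - {r}) C \<longrightarrow> g + m \<le> card C"
    using attach(1) by blast
  moreover have "\<forall>C\<in>?M. r \<in> C" unfolding min_sets using root by blast
  ultimately show ?thesis
    using r unfolding rooted_count_def min_dominating_count_def by blast
qed

lemma adj_image_iff:
  assumes "inj f"
  shows "adj (image f ` F) (f v) (f u) \<longleftrightarrow> adj F v u"
proof -
  have "adj (image f ` F) (f v) (f u) \<longleftrightarrow> (\<exists>e\<in>F. f ` e = f ` {v, u})"
    by (auto simp: adj_def)
  also have "\<dots> \<longleftrightarrow> adj F v u"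
    using assms by (auto simp: adj_def inj_image_eq_iff simp del: image_insert image_empty)
  finally show ?thesis .
qed

lemma dominates_image_iff:
  assumes "inj f"
  shows "dominates (image f ` F) (f ` S) (f ` A) \<longleftrightarrow> dominates F S A"
  using assms by (simp add: dominates_def adj_image_iff inj_image_mem_iff)

lemma min_dominating_count_image:
  assumes f: "inj f" and C: "min_dominating_count W F S k N"
  shows "min_dominating_count (f ` W) (image f ` F) (f ` S) k N"
proof -
  let ?MW = "{A\<in>Pow W. dominates F S A \<and> card A = k}"
  have Pow_image: "Pow (f ` W) = image f ` Pow W" by (simp add: image_Pow_surj)
  have card_f: "card (f ` A) = card A" for A
    using f by (simp add: card_image inj_on_subset)
  have "{B\<in>Pow (f ` W). dominates (image f ` F) (f ` S) B \<and> card B = k}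
      = image f ` {A\<in>Pow W. dominates (image f ` F) (f ` S) (f ` A) \<and> card (f ` A) = k}"
    unfolding Pow_image by blast
  also have "\<dots> = image f ` ?MW" by (simp add: dominates_image_iff[OF f] card_f)
  finally have "{B\<in>Pow (f ` W). dominates (image f ` F) (f ` S) B \<and> card B = k} = image f ` ?MW" .
  moreover have "inj_on (image f) ?MW"
    by (rule inj_on_subset[OF inj_on_image_Pow[OF inj_on_subset[OF f]]]) auto
  ultimately have "card {B\<in>Pow (f ` W). dominates (image f ` F) (f ` S) B \<and> card B = k} = N"
    using C by (simp add: card_image min_dominating_count_def)
  moreover have "\<forall>B\<in>Pow (f ` W). dominates (image f ` F) (f ` S) B \<longrightarrow> k \<le> card B"
  proof (intro ballI impI)
    fix B assume "B \<in> Pow (f ` W)" and dom: "dominates (image f ` F) (f ` S) B"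
    then obtain A where A: "A \<in> Pow W" "B = f ` A" unfolding Pow_image by blast
    then have "dominates F S A" using dom dominates_image_iff[OF f] by blast
    then show "k \<le> card B" using A C card_f by (simp add: min_dominating_count_def)
  qed
  ultimately show ?thesis using C unfolding min_dominating_count_def by blast
qed

lemma simple_graph_image:
  assumes "inj f" "simple_graph W F"
  shows "simple_graph (f ` W) (image f ` F)"
  using assms by (auto simp: simple_graph_def card_image inj_on_subset)

lemma simple_graph_parent_edges:
  assumes "\<forall>j\<in>{1..<s}. q j < j"
  shows "simple_graph {0..<s} (parent_edges s q)"
  using assms by (fastforce simp: simple_graph_def parent_edges_def)

lemma rooted_count_graft:
  assumes R: "rooted_count {0..<n} E r g N"
    and q: "\<forall>j\<in>{1..<s}. q j < j" and s: "0 < s"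
    and C: "min_dominating_count {0..<s} (parent_edges s q) ({0..<s} - {0}) m c"
  shows "rooted_count {0..<n + s} (graft n E r s q) r (g + m) (N * c)"
proof -
  let ?f = "(+) n" and ?W = "{n..<n + s}"
  have f: "inj ?f" by simp
  have W: "?f ` {0..<s} = ?W" by (simp add: add.commute)
  have "simple_graph ?W (image ?f ` parent_edges s q)"
    using simple_graph_image[OF f simple_graph_parent_edges[OF q]] unfolding W .
  moreover have "min_dominating_count ?W (image ?f ` parent_edges s q) (?W - {n}) m c"
    using min_dominating_count_image[OF f C] unfolding image_set_diff[OF f] W by simp
  moreover have "{0..<n} \<union> ?W = {0..<n + s}" by auto
  ultimately show ?thesis
    using rooted_count_attach[OF R] s unfolding graft_def by fastforce
qed

definition path_parent :: "nat \<Rightarrow> nat" where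
  "path_parent j = j - 1"

(* The tree with edges 0-1-2, 2-3-5 and 2-4-6. *)
definition tripod_parent :: "nat \<Rightarrow> nat" where
  "tripod_parent j = [0, 0, 1, 2, 2, 3, 4] ! j"

lemma path_parent_lt: "\<forall>j\<in>{1..<s}. path_parent j < j"
  by (simp add: path_parent_def)

lemma tripod_parent_lt: "\<forall>j\<in>{1..<7}. tripod_parent j < j"
  by code_simp

lemma path_gadget: "min_dominating_count {0..<5} (parent_edges 5 path_parent) ({0..<5} - {0}) 2 5"
  by code_simp

lemma tripod_gadget: "min_dominating_count {0..<7} (parent_edges 7 tripod_parent) ({0..<7} - {0}) 3 11"
  by code_simp

lemma star_rooted_count: "rooted_count {0..<3::nat} {{0, 1}, {0, 2}} 0 1 1"
proof -
  have "simple_graph {0..<3::nat} {{0, 1}, {0, 2}}" by (simp add: simple_graph_def)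
  moreover have "min_dominating_count {0..<3::nat} {{0, 1}, {0, 2}} ({0..<3} - {0}) 1 1
      \<and> (\<forall>A\<in>Pow {0..<3::nat}. dominates {{0, 1}, {0, 2}} ({0..<3} - {0}) A \<and> card A = 1 \<longrightarrow> 0 \<in> A)"
    by code_simp
  ultimately show ?thesis by (simp add: rooted_count_def)
qed

lemma is_tree_star: "is_tree {0..<3::nat} {{0, 1}, {0, 2}}"
proof -
  have "is_tree (insert 1 {0::nat}) (insert {0, 1} {})"
    by (rule is_tree_insert_leaf[OF is_tree_singleton]) auto
  then have "is_tree (insert 2 (insert 1 {0::nat})) (insert {0, 2} (insert {0, 1} {}))"
    by (rule is_tree_insert_leaf) auto
  moreover have "{0..<3::nat} = {0, 1, 2}" by auto
  ultimately show ?thesis by (simp add: insert_commute)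
qed

primrec spider_edges :: "nat \<Rightarrow> nat set set" where
  "spider_edges 0 = {{0, 1}, {0, 2}}"
| "spider_edges (Suc k) = graft (3 + 5 * k) (spider_edges k) 0 5 path_parent"

lemma spider_rooted_count:
  "is_tree {0..<3 + 5 * k} (spider_edges k) \<and>
   rooted_count {0..<3 + 5 * k} (spider_edges k) 0 (2 * k + 1) (5 ^ k)"
proof (induction k)
  case 0
  then show ?case using is_tree_star star_rooted_count by simp
next
  case (Suc k)
  have "is_tree {0..<3 + 5 * k + 5} (graft (3 + 5 * k) (spider_edges k) 0 5 path_parent)"
    using Suc path_parent_lt by (intro is_tree_graft) auto
  moreover have "rooted_count {0..<3 + 5 * k + 5} (graft (3 + 5 * k) (spider_edges k) 0 5 path_parent)
      0 (2 * k + 1 + 2) (5 ^ k * 5)"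
    using Suc path_parent_lt path_gadget by (intro rooted_count_graft) auto
  ultimately show ?case by (simp add: algebra_simps)
qed

lemma spider_min_dominating_count:
  "is_tree {0..<3 + 5 * k} (spider_edges k) \<and>
   min_dominating_count {0..<3 + 5 * k} (spider_edges k) {0..<3 + 5 * k} (2 * k + 1) (5 ^ k)"
  using spider_rooted_count[of k] by (auto intro: rooted_count_min_dominating_count)

lemma spider_tripod_min_dominating_count:
  fixes k :: nat
  defines "V \<equiv> {0..<3 + 5 * k + 7}" and "E \<equiv> graft (3 + 5 * k) (spider_edges k) 0 7 tripod_parent"
  shows "is_tree V E \<and> min_dominating_count V E V (2 * k + 4) (11 * 5 ^ k)"
proof
  show "is_tree V E"
    unfolding V_def E_def using spider_rooted_count tripod_parent_lt by (intro is_tree_graft) auto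
  have "rooted_count V E 0 (2 * k + 1 + 3) (5 ^ k * 11)"
    unfolding V_def E_def using spider_rooted_count tripod_parent_lt tripod_gadget
    by (intro rooted_count_graft) auto
  moreover have "2 * k + 1 + 3 = 2 * k + 4" "5 ^ k * 11 = 11 * (5::nat) ^ k" by simp_all
  ultimately show "min_dominating_count V E V (2 * k + 4) (11 * 5 ^ k)"
    using rooted_count_min_dominating_count by metis
qed

lemma path4_min_dominating_count:
  "is_tree {0..<4} (graft 1 {} 0 3 path_parent) \<and>
   min_dominating_count {0..<4} (graft 1 {} 0 3 path_parent) {0..<4} 2 4"
proof
  show "is_tree {0..<4} (graft 1 {} 0 3 path_parent)"
    using is_tree_graft[of 1 "{}" 0 3 path_parent] is_tree_singleton[of 0] path_parent_lt[of 3] by simp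
  show "min_dominating_count {0..<4} (graft 1 {} 0 3 path_parent) {0..<4} 2 4"
    by code_simp
qed

lemma exists_tree_of_min_dominating_count:
  fixes V :: "nat set"
  assumes "is_tree V E \<and> min_dominating_count V E V k N" "2 / 5 * sqrt 5 ^ k < real N"
  shows "\<exists>(V :: nat set) E. is_tree V E \<and> domination_number V E = k \<and>
           real (num_min_dominating V E) > 2 / 5 * sqrt 5 ^ k"
  using assms min_dominating_count_domination by blast

theorem mainTheorem3:
  fixes \<gamma> :: nat
  assumes "\<gamma> \<ge> 1"
  shows "\<exists>(V :: nat set) (E :: nat set set).
           is_tree V E \<and> domination_number V E = \<gamma> \<and>
           real (num_min_dominating V E) > 2 / 5 * sqrt 5 ^ \<gamma>"
proof -
  have sqrt5: "sqrt 5 ^ (2 * j) = (5::real) ^ j" for j by (simp add: power_mult)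
  have "\<exists>k. \<gamma> = 2 * k + 1 \<or> \<gamma> = 2 \<or> \<gamma> = 2 * k + 4" using assms by presburger
  then obtain k where "\<gamma> = 2 * k + 1 \<or> \<gamma> = 2 \<or> \<gamma> = 2 * k + 4" by blast
  then consider (odd) "\<gamma> = 2 * k + 1" | (two) "\<gamma> = 2" | (even) "\<gamma> = 2 * k + 4" by blast
  then show ?thesis
  proof cases
    case odd
    have "sqrt 5 < (5 / 2 :: real)" by (rule real_less_lsqrt) (simp_all add: power2_eq_square)
    then have "2 / 5 * sqrt 5 ^ (2 * k + 1) < real (5 ^ k)" by (simp add: power_add sqrt5)
    then show ?thesis
      unfolding odd by (rule exists_tree_of_min_dominating_count[OF spider_min_dominating_count])
  next
    case two
    show ?thesis
      unfolding two by (rule exists_tree_of_min_dominating_count[OF path4_min_dominating_count]) simp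
  next
    case even
    have "2 * k + 4 = 2 * (k + 2)" by simp
    then have "2 / 5 * sqrt 5 ^ (2 * k + 4) < real (11 * 5 ^ k)" by (simp only: sqrt5) simp
    then show ?thesis
      unfolding even by (rule exists_tree_of_min_dominating_count[OF spider_tripod_min_dominating_count])
  qed
qed

end
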